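(* (1) Treegrams need not be join-irreducible in $\mathbf{Cliqgm}(X)$: for $X=\{x,y,z\}$ there is a treegram over $X$ which equals the join in $\mathbf{Cliqgm}(X)$ of three cliquegrams each different from it. (2) Treegrams are join-dense in $\mathbf{Cliqgm}(X)$: for every finite set $X$, every cliquegram over $X$ is the join in $\mathbf{Cliqgm}(X)$ (computed pointwise in $\mathbf{Cliq}(X)$) of finitely many treegrams over $X$.
   Context: A clique-set of $X$ is a set $\mathcal{C}$ of nonempty subsets of $X$ such that (i) no member is contained in another, and (ii) for every nonempty $Y\subset X$, if every pair $y,y'\in Y$ (possibly equal) lies in some member of $\mathcal{C}$, then $Y$ lies in some member of $\mathcal{C}$. $\mathbf{Cliq}(X)$ is ordered by $\mathcal{C}\leq\mathcal{C}'$ iff every member of $\mathcal{C}$ is contained in a member of $\mathcal{C}'$; the join of clique-sets is the set of maximal cliques of the union of their graphs (vertices = union of members, edges = pairs of distinct elements lying in a common member). A cliquegram over $X$ is a map $C_X:\mathbb{R}\to\mathbf{Cliq}(X)$ that is monotone, equals $\{X\}$ for all large $t$ and $\emptyset$ for all small $t$, and is constant on $(-\infty,a_1)$, on each $[a_i,a_{i+1})$ and on $[a_n,\infty)$ for some reals $a_1<\dots<a_n$; $\mathbf{Cliqgm}(X)$ is the lattice of cliquegrams with pointwise order and operations. A treegram over $X$ is a cliquegram $C_X$ such that each $C_X(t)$ is a subpartition of $X$ (pairwise disjoint members). Join-irreducible: not the bottom element and not equal to a join of two elements both different from it. *)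

theory Defs
  imports Main "HOL.Real"
begin

definition is_cliqset :: "'a set \<Rightarrow> 'a set set \<Rightarrow> bool" where
  "is_cliqset X C \<longleftrightarrow>
     (\<forall>c\<in>C. c \<noteq> {} \<and> c \<subseteq> X) \<and>
     (\<forall>c\<in>C. \<forall>c'\<in>C. c \<subseteq> c' \<longrightarrow> c = c') \<and>
     (\<forall>Y. Y \<noteq> {} \<and> Y \<subseteq> X \<and> (\<forall>y\<in>Y. \<forall>y'\<in>Y. \<exists>c\<in>C. y \<in> c \<and> y' \<in> c)
          \<longrightarrow> (\<exists>c\<in>C. Y \<subseteq> c))"

definition Cliq :: "'a set \<Rightarrow> 'a set set set" where
  "Cliq X = {C. is_cliqset X C}"

definition cliq_le :: "'a set set \<Rightarrow> 'a set set \<Rightarrow> bool" where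
  "cliq_le C D \<longleftrightarrow> (\<forall>c\<in>C. \<exists>d\<in>D. c \<subseteq> d)"

definition gr_vertices :: "'a set set set \<Rightarrow> 'a set" where
  "gr_vertices S = \<Union>(\<Union>S)"

definition gr_adj :: "'a set set set \<Rightarrow> 'a \<Rightarrow> 'a \<Rightarrow> bool" where
  "gr_adj S u v \<longleftrightarrow> u \<noteq> v \<and> (\<exists>C\<in>S. \<exists>c\<in>C. u \<in> c \<and> v \<in> c)"

definition gr_clique :: "'a set set set \<Rightarrow> 'a set \<Rightarrow> bool" where
  "gr_clique S K \<longleftrightarrow> K \<noteq> {} \<and> K \<subseteq> gr_vertices S \<and>
     (\<forall>u\<in>K. \<forall>v\<in>K. u \<noteq> v \<longrightarrow> gr_adj S u v)"

definition cliq_Join :: "'a set set set \<Rightarrow> 'a set set" where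
  "cliq_Join S = {K. gr_clique S K \<and> \<not> (\<exists>K'. gr_clique S K' \<and> K \<subset> K')}"

definition cliq_join :: "'a set set \<Rightarrow> 'a set set \<Rightarrow> 'a set set" where
  "cliq_join C D = cliq_Join {C, D}"

definition cliquegram :: "'a set \<Rightarrow> (real \<Rightarrow> 'a set set) \<Rightarrow> bool" where
  "cliquegram X C \<longleftrightarrow>
     (\<forall>t. C t \<in> Cliq X) \<and>
     (\<forall>s t. s \<le> t \<longrightarrow> cliq_le (C s) (C t)) \<and>
     (\<exists>T. \<forall>t\<ge>T. C t = {X}) \<and>
     (\<exists>T. \<forall>t\<le>T. C t = {}) \<and>
     (\<exists>A::real set. finite A \<and>
        (\<forall>s t. s \<le> t \<and> \<not> (\<exists>a\<in>A. s < a \<and> a \<le> t) \<longrightarrow> C s = C t))"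

definition subpartition :: "'a set set \<Rightarrow> bool" where
  "subpartition C \<longleftrightarrow> (\<forall>c\<in>C. \<forall>c'\<in>C. c \<noteq> c' \<longrightarrow> c \<inter> c' = {})"

definition treegram :: "'a set \<Rightarrow> (real \<Rightarrow> 'a set set) \<Rightarrow> bool" where
  "treegram X C \<longleftrightarrow> cliquegram X C \<and> (\<forall>t. subpartition (C t))"

end

theory Submission
  imports Defs
begin

text \<open>(1) For three distinct points, take the treegram that is the single block \<open>{x, y, z}\<close>
  from time 0 on, and the three cliquegrams that are a single edge on \<open>[0, 1)\<close> and \<open>{x, y, z}\<close>
  afterwards. On \<open>[0, 1)\<close> the union of the three edge graphs is a triangle, whose only maximal
  clique is \<open>{x, y, z}\<close>; so the treegram is the join, yet differs from each edge cliquegram.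

  (2) A cliquegram \<open>C\<close> is constant between finitely many breakpoints. Every clique \<open>c\<close> of \<open>C s\<close>
  at a breakpoint \<open>s\<close> yields the treegram that is empty before \<open>s\<close>, is \<open>{c}\<close> until \<open>C\<close> becomes
  \<open>{X}\<close>, and is \<open>{X}\<close> afterwards. By monotonicity each of them lies below \<open>C\<close>, and each clique
  of \<open>C t\<close> already occurs at the last breakpoint before \<open>t\<close>; a family of clique-sets bounded by
  a clique-set \<open>D\<close> and covering all members of \<open>D\<close> has join \<open>D\<close>.\<close>

lemma is_cliqset_empty: "is_cliqset X {}"
  unfolding is_cliqset_def by auto

lemma is_cliqset_singleton: "c \<noteq> {} \<Longrightarrow> c \<subseteq> X \<Longrightarrow> is_cliqset X {c}"
  unfolding is_cliqset_def by auto

lemma gr_clique_iff_below_cliqset: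
  assumes D: "is_cliqset X D" and below: "\<forall>E\<in>S. cliq_le E D" and cover: "D \<subseteq> \<Union>S"
  shows "gr_clique S K \<longleftrightarrow> K \<noteq> {} \<and> (\<exists>d\<in>D. K \<subseteq> d)"
proof
  have in_D: "\<exists>d\<in>D. u \<in> d \<and> v \<in> d" if E: "E \<in> S" "c \<in> E" "u \<in> c" "v \<in> c" for E c u v
  proof -
    obtain d where "d \<in> D" "c \<subseteq> d" using below E(1,2) unfolding cliq_le_def by blast
    then show ?thesis using E(3,4) by blast
  qed
  assume K: "gr_clique S K"
  have pairs: "\<exists>d\<in>D. u \<in> d \<and> v \<in> d" if "u \<in> K" "v \<in> K" for u v
  proof (cases "u = v")
    case True
    with K \<open>u \<in> K\<close> obtain E c where "E \<in> S" "c \<in> E" "u \<in> c"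
      unfolding gr_clique_def gr_vertices_def by blast
    then show ?thesis using in_D True by blast
  next
    case False
    with K that obtain E c where "E \<in> S" "c \<in> E" "u \<in> c" "v \<in> c"
      unfolding gr_clique_def gr_adj_def by blast
    then show ?thesis using in_D by blast
  qed
  have "K \<noteq> {}"
    using K unfolding gr_clique_def by simp
  moreover have "K \<subseteq> X"
  proof
    fix u assume "u \<in> K"
    then obtain d where "d \<in> D" "u \<in> d" using pairs by blast
    then show "u \<in> X" using D unfolding is_cliqset_def by blast
  qed
  ultimately have "\<exists>d\<in>D. K \<subseteq> d"
    using pairs D unfolding is_cliqset_def by (elim conjE allE[of _ K]) blast
  with \<open>K \<noteq> {}\<close> show "K \<noteq> {} \<and> (\<exists>d\<in>D. K \<subseteq> d)" ..
next
  assume "K \<noteq> {} \<and> (\<exists>d\<in>D. K \<subseteq> d)"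
  then obtain d E where "K \<noteq> {}" "K \<subseteq> d" "d \<in> E" "E \<in> S"
    using cover by blast
  then show "gr_clique S K"
    unfolding gr_clique_def gr_adj_def gr_vertices_def by blast
qed

lemma cliq_Join_eq_cliqset:
  assumes D: "is_cliqset X D" and below: "\<forall>E\<in>S. cliq_le E D" and cover: "D \<subseteq> \<Union>S"
  shows "cliq_Join S = D"
proof -
  note clique = gr_clique_iff_below_cliqset[OF assms]
  have antichain: "d = d'" if "d \<in> D" "d' \<in> D" "d \<subseteq> d'" for d d'
    using D that unfolding is_cliqset_def by blast
  have nonempty: "d \<noteq> {}" if "d \<in> D" for d
    using D that unfolding is_cliqset_def by blast
  show ?thesis
  proof
    show "cliq_Join S \<subseteq> D"
    proof
      fix K assume "K \<in> cliq_Join S"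
      then obtain d where "d \<in> D" "K \<subseteq> d" "\<not> K \<subset> d"
        unfolding cliq_Join_def clique using nonempty by blast
      then show "K \<in> D" by (simp add: psubset_eq)
    qed
    show "D \<subseteq> cliq_Join S"
    proof
      fix d assume d: "d \<in> D"
      have "\<not> d \<subset> K" if "K \<subseteq> d'" "d' \<in> D" for K d'
        using antichain[OF d \<open>d' \<in> D\<close>] that by blast
      then show "d \<in> cliq_Join S"
        unfolding cliq_Join_def clique using d nonempty by fastforce
    qed
  qed
qed

lemma cliq_join_eq_cliqset:
  "is_cliqset X D \<Longrightarrow> cliq_le A D \<Longrightarrow> cliq_le B D \<Longrightarrow> D \<subseteq> A \<union> B \<Longrightarrow> cliq_join A B = D"
  unfolding cliq_join_def by (rule cliq_Join_eq_cliqset) auto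

definition single_block_gram :: "real \<Rightarrow> real \<Rightarrow> 'a set \<Rightarrow> 'a set \<Rightarrow> real \<Rightarrow> 'a set set" where
  "single_block_gram s u c X t = (if t < s then {} else if t < u then {c} else {X})"

lemma treegram_single_block_gram:
  assumes "c \<noteq> {}" "c \<subseteq> X"
  shows "treegram X (single_block_gram s u c X)"
proof -
  let ?G = "single_block_gram s u c X"
  have "X \<noteq> {}" using assms by auto
  then have "?G t \<in> Cliq X" for t
    unfolding single_block_gram_def Cliq_def
    using is_cliqset_empty is_cliqset_singleton[OF assms] is_cliqset_singleton[of X X] by auto
  moreover have "cliq_le (?G r) (?G t)" if "r \<le> t" for r t
    using that assms unfolding single_block_gram_def cliq_le_def by auto
  moreover have "\<forall>t\<ge>max s u. ?G t = {X}" "\<forall>t\<le>s - 1. ?G t = {}"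
    by (auto simp: single_block_gram_def)
  moreover have "?G r = ?G t" if "r \<le> t" "\<not> (\<exists>a\<in>{s, u}. r < a \<and> a \<le> t)" for r t
    using that unfolding single_block_gram_def by auto
  moreover have "subpartition (?G t)" for t
    unfolding single_block_gram_def subpartition_def by auto
  ultimately show ?thesis
    unfolding treegram_def cliquegram_def by (meson finite.emptyI finite_insert)
qed

lemma triangle_cliq_join:
  fixes x y z :: 'a
  assumes "x \<noteq> y" "y \<noteq> z" "x \<noteq> z"
  shows "cliq_join (cliq_join {{x, y}} {{y, z}}) {{x, z}} = {{x, y, z}}"
proof -
  have path: "is_cliqset {x, y, z} {{x, y}, {y, z}}"
    unfolding is_cliqset_def
  proof (intro conjI allI impI)
    fix Y assume Y: "Y \<noteq> {} \<and> Y \<subseteq> {x, y, z} \<and>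
      (\<forall>a\<in>Y. \<forall>b\<in>Y. \<exists>c\<in>{{x, y}, {y, z}}. a \<in> c \<and> b \<in> c)"
    then have "\<not> (x \<in> Y \<and> z \<in> Y)" using assms by fastforce
    then show "\<exists>c\<in>{{x, y}, {y, z}}. Y \<subseteq> c" using Y by auto
  qed (use assms in simp_all)
  have "cliq_join {{x, y}} {{y, z}} = {{x, y}, {y, z}}"
    by (rule cliq_join_eq_cliqset[OF path]) (auto simp: cliq_le_def)
  moreover
  let ?S = "{{{x, y}, {y, z}}, {{x, z}}}"
  have vertices: "gr_vertices ?S = {x, y, z}"
    unfolding gr_vertices_def by auto
  have adj: "gr_adj ?S u v \<longleftrightarrow> u \<noteq> v \<and> u \<in> {x, y, z} \<and> v \<in> {x, y, z}" for u v
    unfolding gr_adj_def by auto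
  have "gr_clique ?S K \<longleftrightarrow> K \<noteq> {} \<and> K \<subseteq> {x, y, z}" for K
    unfolding gr_clique_def vertices adj by auto
  then have "cliq_Join ?S = {{x, y, z}}"
    unfolding cliq_Join_def by auto
  ultimately show ?thesis
    unfolding cliq_join_def by simp
qed

lemma triangle_treegram_join_of_edge_cliquegrams:
  fixes x y z :: 'a
  assumes distinct: "x \<noteq> y" "y \<noteq> z" "x \<noteq> z"
  shows "\<exists>T C1 C2 C3. treegram {x, y, z} T \<and>
    cliquegram {x, y, z} C1 \<and> cliquegram {x, y, z} C2 \<and> cliquegram {x, y, z} C3 \<and>
    C1 \<noteq> T \<and> C2 \<noteq> T \<and> C3 \<noteq> T \<and> T = (\<lambda>t. cliq_join (cliq_join (C1 t) (C2 t)) (C3 t))"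
proof -
  let ?X = "{x, y, z}"
  let ?T = "single_block_gram 0 1 ?X ?X"
  let ?edge = "\<lambda>c. single_block_gram 0 1 c ?X"
  have "treegram ?X ?T"
    by (rule treegram_single_block_gram) auto
  have edge: "cliquegram ?X (?edge c) \<and> ?edge c \<noteq> ?T" if "c \<in> {{x, y}, {y, z}, {x, z}}" for c
  proof
    show "cliquegram ?X (?edge c)"
      using treegram_single_block_gram[of c ?X] that unfolding treegram_def by auto
    have "?edge c 0 \<noteq> ?T 0"
      using that distinct by (auto simp: single_block_gram_def)
    then show "?edge c \<noteq> ?T" by metis
  qed
  have join_X: "cliq_join {?X} {?X} = {?X}"
    by (rule cliq_join_eq_cliqset[OF is_cliqset_singleton[of ?X ?X]]) (auto simp: cliq_le_def)
  have join_empty: "cliq_join {} {} = ({} :: 'a set set)"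
    by (rule cliq_join_eq_cliqset[OF is_cliqset_empty]) (auto simp: cliq_le_def)
  have "?T t = cliq_join (cliq_join (?edge {x, y} t) (?edge {y, z} t)) (?edge {x, z} t)" for t
  proof -
    consider "t < 0" | "0 \<le> t" "t < 1" | "1 \<le> t" by linarith
    then show ?thesis
      by cases (simp_all add: single_block_gram_def join_empty join_X triangle_cliq_join[OF distinct])
  qed
  then show ?thesis
    using \<open>treegram ?X ?T\<close> edge by blast
qed

lemma cliquegramE:
  assumes "cliquegram X C"
  obtains u t0 A where "\<And>t. is_cliqset X (C t)" "\<And>s t. s \<le> t \<Longrightarrow> cliq_le (C s) (C t)"
    "\<And>t. u \<le> t \<Longrightarrow> C t = {X}" "\<And>t. t \<le> t0 \<Longrightarrow> C t = {}" "finite A"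
    "\<And>s t. s \<le> t \<Longrightarrow> \<not> (\<exists>a\<in>A. s < a \<and> a \<le> t) \<Longrightarrow> C s = C t"
proof -
  from assms obtain u t0 A where "\<forall>t. C t \<in> Cliq X" "\<forall>s t. s \<le> t \<longrightarrow> cliq_le (C s) (C t)"
    "\<forall>t\<ge>u. C t = {X}" "\<forall>t\<le>t0. C t = {}" "finite A"
    "\<forall>s t. s \<le> t \<and> \<not> (\<exists>a\<in>A. s < a \<and> a \<le> t) \<longrightarrow> C s = C t"
    unfolding cliquegram_def by (elim conjE exE)
  then show thesis by (intro that[of u t0 A]) (auto simp: Cliq_def)
qed

lemma finite_cliqset: "finite X \<Longrightarrow> is_cliqset X C \<Longrightarrow> finite C"
  unfolding is_cliqset_def by (meson Pow_iff finite_Pow_iff finite_subset subsetI)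

lemma piecewise_constant_value_at_breakpoint:
  fixes f :: "real \<Rightarrow> 'b"
  assumes A: "finite A"
    and const: "\<And>s t. s \<le> t \<Longrightarrow> \<not> (\<exists>a\<in>A. s < a \<and> a \<le> t) \<Longrightarrow> f s = f t"
    and bottom: "\<And>t. t \<le> t0 \<Longrightarrow> f t = b"
    and "f t \<noteq> b"
  shows "\<exists>s\<in>A. s \<le> t \<and> f s = f t"
proof (cases "{a\<in>A. a \<le> t} = {}")
  case True
  then have "f (min t0 t) = f t" by (intro const) auto
  then show ?thesis using bottom[of "min t0 t"] \<open>f t \<noteq> b\<close> by simp
next
  case False
  define s where "s = Max {a\<in>A. a \<le> t}"
  have "finite {a\<in>A. a \<le> t}" using A by simp
  then have "s \<in> A" "s \<le> t" "\<forall>a\<in>A. a \<le> t \<longrightarrow> a \<le> s"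
    using Max_in[OF _ False] unfolding s_def by auto
  then show ?thesis by (metis const not_le)
qed

lemma cliq_le_single_block_gram:
  assumes mono: "\<And>s t. s \<le> t \<Longrightarrow> cliq_le (C s) (C t)"
    and top: "\<And>t. u \<le> t \<Longrightarrow> C t = {X}" and c: "c \<in> C s"
  shows "cliq_le (single_block_gram s u c X t) (C t)"
  using mono[of s t] c top[of t] unfolding single_block_gram_def cliq_le_def by auto

lemma cliquegram_eq_Join_of_treegrams:
  assumes X: "finite X" and C: "cliquegram X C"
  shows "\<exists>F. finite F \<and> (\<forall>T\<in>F. treegram X T) \<and> C = (\<lambda>t. cliq_Join ((\<lambda>T. T t) ` F))"
proof -
  obtain u t0 A where cliqset: "\<And>t. is_cliqset X (C t)"
    and mono: "\<And>s t. s \<le> t \<Longrightarrow> cliq_le (C s) (C t)"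
    and top: "\<And>t. u \<le> t \<Longrightarrow> C t = {X}" and bottom: "\<And>t. t \<le> t0 \<Longrightarrow> C t = {}"
    and A: "finite A" and const: "\<And>s t. s \<le> t \<Longrightarrow> \<not> (\<exists>a\<in>A. s < a \<and> a \<le> t) \<Longrightarrow> C s = C t"
    using C by (rule cliquegramE) blast
  have member: "c \<noteq> {} \<and> c \<subseteq> X" if "c \<in> C s" for c s
    using cliqset[of s] that unfolding is_cliqset_def by blast
  define F where "F = (\<lambda>(s, c). single_block_gram s u c X) ` (SIGMA s:A. C s)"
  have "finite F"
    unfolding F_def using A finite_cliqset[OF X cliqset] by simp
  moreover have "\<forall>T\<in>F. treegram X T"
    unfolding F_def using member by (auto intro!: treegram_single_block_gram)
  moreover have "C t = cliq_Join ((\<lambda>T. T t) ` F)" for t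
  proof (rule cliq_Join_eq_cliqset[OF cliqset, symmetric])
    show "\<forall>E\<in>(\<lambda>T. T t) ` F. cliq_le E (C t)"
      unfolding F_def using cliq_le_single_block_gram[OF mono top] by auto
    show "C t \<subseteq> \<Union>((\<lambda>T. T t) ` F)"
    proof
      fix d assume d: "d \<in> C t"
      then obtain s where s: "s \<in> A" "s \<le> t" "C s = C t"
        using piecewise_constant_value_at_breakpoint[where f = C, OF A const bottom] by blast
      then have "single_block_gram s u d X \<in> F"
        unfolding F_def using d by force
      moreover have "d \<in> single_block_gram s u d X t"
        using s d top[of t] by (auto simp: single_block_gram_def)
      ultimately show "d \<in> \<Union>((\<lambda>T. T t) ` F)" by blast
    qed
  qed
  ultimately show ?thesis by blast
qed

theorem mainTheorem6:
  shows "(\<forall>(x::'a) y z. x \<noteq> y \<and> y \<noteq> z \<and> x \<noteq> z \<longrightarrow>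
           (\<exists>T C1 C2 C3. treegram {x, y, z} T \<and>
              cliquegram {x, y, z} C1 \<and> cliquegram {x, y, z} C2 \<and> cliquegram {x, y, z} C3 \<and>
              C1 \<noteq> T \<and> C2 \<noteq> T \<and> C3 \<noteq> T \<and>
              T = (\<lambda>t. cliq_join (cliq_join (C1 t) (C2 t)) (C3 t))))
       \<and>
         (\<forall>(X::'b set) C. finite X \<and> cliquegram X C \<longrightarrow>
           (\<exists>F. finite F \<and> (\<forall>T\<in>F. treegram X T) \<and>
              C = (\<lambda>t. cliq_Join ((\<lambda>T. T t) ` F))))"
  by (intro conjI allI impI; elim conjE)
    (assumption | rule triangle_treegram_join_of_edge_cliquegrams cliquegram_eq_Join_of_treegrams)+

end
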